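(* Fix $n\ge4$ and a circular ordering $\pi$. For every chain $\mathcal C: D_0\subsetneq D_1\subsetneq\dots\subsetneq D_m$ of sets of pairwise noncrossing diagonals of $P_n$, let $\Delta_{\mathcal C}$ be the corresponding simplex of the barycentric subdivision of $K_{n-1}$ (the convex hull of the barycenters $v_{D_0},\dots,v_{D_m}$ of the corresponding faces), and define $\Phi$ on $\Delta_{\mathcal C}$ affinely by $\Phi\big(\sum_i a_i v_{D_i}\big)=\sum_i a_i\Phi(D_i)$ ($a_i\ge0$, $\sum a_i=1$), so that $\Phi(\Delta_{\mathcal C})$ is the convex hull of $\Phi(D_0),\dots,\Phi(D_m)$. Then $\Phi$ restricted to each $\Delta_{\mathcal C}$ is an embedding into the chamber $\Delta_\pi$ of $\mathfrak S_n$, these maps agree on common faces, and together they define an embedding of the associahedron $K_{n-1}$ (the union of all $\Delta_{\mathcal C}$) into the chamber $\Delta_\pi$ of $\mathfrak S_n$.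
   Context: Fix a circular ordering $\pi=(x_1,\dots,x_n)$ of a set $X$ of $n\ge4$ labels and let $P_n$ be a regular $n$-gon with edges labeled cyclically by $x_1,\dots,x_n$. Diagonals of $P_n$ correspond bijectively to nontrivial splits of $X$ circular w.r.t. $\pi$ (a diagonal separates the edge labels into the two parts); two diagonals cross if they meet in the interior of $P_n$. The chamber $\Delta_\pi$ of the network space $\mathfrak S_n$ is identified with $\{x\in\mathbb R_{\ge0}^{\mathcal D}:\sum_d x_d=1\}$, where $\mathcal D$ is the set of the $n(n-3)/2$ diagonals of $P_n$. The associahedron $K_{n-1}$ is the $(n-3)$-dimensional convex polytope whose faces correspond bijectively to sets $D$ of pairwise noncrossing diagonals of $P_n$, the face of $D$ containing the face of $D'$ iff $D\subseteq D'$; the face of $D$ has codimension $|D|$, vertices correspond to triangulations ($n-3$ diagonals), and the whole polytope corresponds to $D=\emptyset$. For a triangulation $T$, $\Phi(T)\in\mathbb R^{\mathcal D}$ has $d$-coordinate $1/(n-3)$ if $d\in T$ and $0$ otherwise. For a set $D$ of pairwise noncrossing diagonals, $\Phi(D)$ (the image of the barycenter $v_D$ of the face of $D$) is the average of $\Phi(T)$ over all triangulations $T\supseteq D$. *)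

theory Defs
  imports "HOL-Analysis.Analysis"
begin

text \<open>Vertices of the n-gon P_n are 0,...,n-1 in cyclic order (edge x_k joins
vertices k-1 and k).  A diagonal is a pair (i,j) with i < j of non-adjacent vertices.\<close>

type_synonym diag = "nat \<times> nat"

definition is_diag :: "nat \<Rightarrow> diag \<Rightarrow> bool" where
  "is_diag n d = (fst d < snd d \<and> snd d < n \<and> 2 \<le> snd d - fst d
                   \<and> \<not> (fst d = 0 \<and> snd d = n - 1))"

definition diagonals :: "nat \<Rightarrow> diag set" where
  "diagonals n = {d. is_diag n d}"

definition crosses :: "diag \<Rightarrow> diag \<Rightarrow> bool" where
  "crosses d e = ((fst d < fst e \<and> fst e < snd d \<and> snd d < snd e)
                \<or> (fst e < fst d \<and> fst d < snd e \<and> snd e < snd d))"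

definition noncrossing :: "nat \<Rightarrow> diag set \<Rightarrow> bool" where
  "noncrossing n D = (D \<subseteq> diagonals n \<and> (\<forall>d\<in>D. \<forall>e\<in>D. \<not> crosses d e))"

definition triangulation :: "nat \<Rightarrow> diag set \<Rightarrow> bool" where
  "triangulation n T = (noncrossing n T \<and> card T = n - 3)"

text \<open>Points of R^D are functions diag => real vanishing off the diagonals.\<close>
definition Phi_T :: "nat \<Rightarrow> diag set \<Rightarrow> diag \<Rightarrow> real" where
  "Phi_T n T = (\<lambda>d. if d \<in> T then 1 / real (n - 3) else 0)"

definition Phi :: "nat \<Rightarrow> diag set \<Rightarrow> diag \<Rightarrow> real" where
  "Phi n D = (\<lambda>d. (\<Sum>T\<in>{T. triangulation n T \<and> D \<subseteq> T}. Phi_T n T d)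
                    / real (card {T. triangulation n T \<and> D \<subseteq> T}))"

definition chamber :: "nat \<Rightarrow> (diag \<Rightarrow> real) set" where
  "chamber n = {x. (\<forall>d. 0 \<le> x d) \<and> (\<forall>d. d \<notin> diagonals n \<longrightarrow> x d = 0)
                   \<and> (\<Sum>d\<in>diagonals n. x d) = 1}"

definition nc_chain :: "nat \<Rightarrow> diag set set \<Rightarrow> bool" where
  "nc_chain n C = (finite C \<and> C \<noteq> {} \<and> (\<forall>D\<in>C. noncrossing n D)
                   \<and> (\<forall>D\<in>C. \<forall>D'\<in>C. D \<subseteq> D' \<or> D' \<subseteq> D))"

text \<open>The simplex Delta_C of the barycentric subdivision of K_{n-1}: a point
sum_i a_i v_{D_i} is recorded by its barycentric coefficient function a.\<close>
definition chain_simplex :: "diag set set \<Rightarrow> (diag set \<Rightarrow> real) set" where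
  "chain_simplex C = {a. (\<forall>D. 0 \<le> a D) \<and> (\<forall>D. D \<notin> C \<longrightarrow> a D = 0) \<and> (\<Sum>D\<in>C. a D) = 1}"

definition assoc :: "nat \<Rightarrow> (diag set \<Rightarrow> real) set" where
  "assoc n = (\<Union>C\<in>{C. nc_chain n C}. chain_simplex C)"

definition Phi_map :: "nat \<Rightarrow> (diag set \<Rightarrow> real) \<Rightarrow> diag \<Rightarrow> real" where
  "Phi_map n a = (\<lambda>d. \<Sum>D\<in>{D. noncrossing n D}. a D * Phi n D d)"

end

theory Submission
  imports Defs
begin

text \<open>
  The coordinate of Phi(D) at a diagonal d is the fraction of the triangulations containing D
  that also contain d, divided by n - 3.  It equals 1/(n-3) exactly when d lies in D: every
  noncrossing set avoiding a diagonal d extends to a triangulation avoiding d, by cutting the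
  polygon along a triangle over one of its sides and inducting on the two pieces.

  Hence, for a point sum_i a_i v_(D_i) whose chain has least face D_0, the image attains its
  largest possible coordinate (sum_i a_i)/(n-3) exactly on the diagonals of D_0.  So the image
  determines D_0; subtracting the common part of the weights at D_0 of two preimages and
  inducting on the sizes of their supports gives injectivity on all of K_(n-1).  A continuous
  injection of a compact set into a Hausdorff space is an embedding.
\<close>

(* Diagonals of the sub-polygon on the vertices a, ..., b, whose side (a, b) is not one. *)
definition diag_in :: "nat \<Rightarrow> nat \<Rightarrow> diag \<Rightarrow> bool" where
  "diag_in a b d \<longleftrightarrow> a \<le> fst d \<and> fst d + 2 \<le> snd d \<and> snd d \<le> b \<and> d \<noteq> (a, b)"

definition noncrossing_in :: "nat \<Rightarrow> nat \<Rightarrow> diag set \<Rightarrow> bool" where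
  "noncrossing_in a b F \<longleftrightarrow> F \<subseteq> Collect (diag_in a b) \<and> (\<forall>x\<in>F. \<forall>y\<in>F. \<not> crosses x y)"

lemma finite_diag_in: "finite (Collect (diag_in a b))"
  by (rule finite_subset[of _ "{a..b} \<times> {a..b}"]) (auto simp: diag_in_def)

lemma noncrossing_in_finite: "noncrossing_in a b F \<Longrightarrow> finite F"
  unfolding noncrossing_in_def using finite_diag_in finite_subset by blast

lemma noncrossing_in_apex_left:
  assumes F: "noncrossing_in a b F" and ab: "a + 2 \<le> b"
  defines "k \<equiv> Max (insert (a + 1) {j. (a, j) \<in> F})"
  shows "a < k \<and> k < b \<and> (k = a + 1 \<or> (a, k) \<in> F)
         \<and> (\<forall>x\<in>F. \<not> crosses (a, k) x \<and> \<not> crosses (k, b) x)"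
proof -
  have fin: "finite {j. (a, j) \<in> F}"
    by (rule finite_surj[OF noncrossing_in_finite[OF F], of _ snd]) force
  have k_max: "\<And>j. (a, j) \<in> F \<Longrightarrow> j \<le> k" and "a + 1 \<le> k"
    using fin by (auto simp: k_def)
  moreover have k_cases: "k = a + 1 \<or> (a, k) \<in> F"
    using Max_in[of "insert (a + 1) {j. (a, j) \<in> F}"] fin by (auto simp: k_def)
  moreover have "k < b"
    using k_cases F ab by (auto simp: noncrossing_in_def diag_in_def)
  moreover have "\<not> crosses (a, k) x \<and> \<not> crosses (k, b) x" if x: "x \<in> F" for x
  proof -
    have dx: "diag_in a b x" using F x by (auto simp: noncrossing_in_def)
    have left: "\<not> crosses (a, k) x"
      using k_cases F x dx by (auto simp: noncrossing_in_def diag_in_def crosses_def)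
    moreover have "\<not> crosses (k, b) x"
    proof
      assume "crosses (k, b) x"
      then have "fst x < k" "k < snd x" using dx by (auto simp: crosses_def diag_in_def)
      moreover have "fst x \<noteq> a" using k_max[of "snd x"] x \<open>k < snd x\<close> by (cases x) auto
      ultimately show False using left dx by (auto simp: crosses_def diag_in_def)
    qed
    ultimately show ?thesis ..
  qed
  ultimately show ?thesis by auto
qed

lemma noncrossing_in_apex_right:
  assumes F: "noncrossing_in a b F" and ab: "a + 2 \<le> b"
  defines "k \<equiv> Min (insert (b - 1) {i. (i, b) \<in> F})"
  shows "a < k \<and> k < b \<and> (k = b - 1 \<or> (k, b) \<in> F)
         \<and> (\<forall>x\<in>F. \<not> crosses (a, k) x \<and> \<not> crosses (k, b) x)"
proof -
  have fin: "finite {i. (i, b) \<in> F}"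
    by (rule finite_surj[OF noncrossing_in_finite[OF F], of _ fst]) force
  have k_min: "\<And>i. (i, b) \<in> F \<Longrightarrow> k \<le> i" and "k \<le> b - 1"
    using fin by (auto simp: k_def)
  moreover have k_cases: "k = b - 1 \<or> (k, b) \<in> F"
    using Min_in[of "insert (b - 1) {i. (i, b) \<in> F}"] fin by (auto simp: k_def)
  moreover have "a < k"
    using k_cases F ab by (auto simp: noncrossing_in_def diag_in_def)
  moreover have "\<not> crosses (a, k) x \<and> \<not> crosses (k, b) x" if x: "x \<in> F" for x
  proof -
    have dx: "diag_in a b x" using F x by (auto simp: noncrossing_in_def)
    have right: "\<not> crosses (k, b) x"
      using k_cases F x dx by (auto simp: noncrossing_in_def diag_in_def crosses_def)
    moreover have "\<not> crosses (a, k) x"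
    proof
      assume "crosses (a, k) x"
      then have "fst x < k" "k < snd x" using dx by (auto simp: crosses_def diag_in_def)
      moreover have "snd x \<noteq> b" using k_min[of "fst x"] x \<open>fst x < k\<close> by (cases x) auto
      ultimately show False using right dx by (auto simp: crosses_def diag_in_def)
    qed
    ultimately show ?thesis by blast
  qed
  ultimately show ?thesis using ab by auto
qed

(* The apexes given by the largest neighbour of a and the smallest neighbour of b in F
   cannot both span a triangle over (a, b) having d as a side. *)
lemma noncrossing_in_apex:
  assumes F: "noncrossing_in a b F" and ab: "a + 2 \<le> b"
    and d: "fst d + 2 \<le> snd d" "d \<notin> F"
  obtains k where "a < k" "k < b" "d \<noteq> (a, k)" "d \<noteq> (k, b)"
    "\<forall>x\<in>F. \<not> crosses (a, k) x \<and> \<not> crosses (k, b) x"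
proof -
  obtain k1 where k1: "a < k1" "k1 < b" "k1 = a + 1 \<or> (a, k1) \<in> F"
    "\<forall>x\<in>F. \<not> crosses (a, k1) x \<and> \<not> crosses (k1, b) x"
    using noncrossing_in_apex_left[OF F ab] by blast
  obtain k2 where k2: "a < k2" "k2 < b" "k2 = b - 1 \<or> (k2, b) \<in> F"
    "\<forall>x\<in>F. \<not> crosses (a, k2) x \<and> \<not> crosses (k2, b) x"
    using noncrossing_in_apex_right[OF F ab] by blast
  have d_not_side: "d \<noteq> (a, a + 1)" "d \<noteq> (b - 1, b)" using d(1) ab by auto
  show thesis
  proof (cases "d = (k1, b)")
    case False
    then show thesis using that[OF k1(1,2) _ _ k1(4)] k1(3) d(2) d_not_side by auto
  next
    case True
    then show thesis using that[OF k2(1,2) _ _ k2(4)] k2(3) k1(1) d(2) d_not_side by auto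
  qed
qed

lemma noncrossing_in_split:
  assumes "a < k" "k < b" "\<forall>x\<in>F. \<not> crosses (a, k) x \<and> \<not> crosses (k, b) x"
    and "F \<subseteq> Collect (diag_in a b)"
  shows "F \<subseteq> Collect (diag_in a k) \<union> Collect (diag_in k b) \<union> {(a, k), (k, b)}"
proof
  fix x assume x: "x \<in> F"
  then have "diag_in a b x" using assms(4) by blast
  moreover have "snd x \<le> k \<or> k \<le> fst x"
    using assms(3) x \<open>diag_in a b x\<close> by (cases x) (auto simp: diag_in_def crosses_def)
  ultimately show "x \<in> Collect (diag_in a k) \<union> Collect (diag_in k b) \<union> {(a, k), (k, b)}"
    by (cases x) (auto simp: diag_in_def)
qed

lemma crosses_sym: "crosses x y \<longleftrightarrow> crosses y x"
  by (auto simp: crosses_def)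

lemma not_crosses_separated: "snd x \<le> k \<Longrightarrow> k \<le> fst y \<Longrightarrow> \<not> crosses x y"
  by (auto simp: crosses_def)

lemma not_crosses_enclosing: "a \<le> fst x \<Longrightarrow> snd x \<le> k \<Longrightarrow> \<not> crosses (a, k) x"
  by (auto simp: crosses_def)

lemma noncrossing_in_glue:
  assumes ak: "a < k" and kb: "k < b"
    and T1: "noncrossing_in a k T1" and T2: "noncrossing_in k b T2"
  shows "noncrossing_in a b (T1 \<union> T2 \<union> ({(a, k), (k, b)} \<inter> Collect (diag_in a b)))"
proof -
  let ?L = "T1 \<union> {(a, k)}" and ?R = "T2 \<union> {(k, b)}"
  have L: "a \<le> fst x \<and> snd x \<le> k" if "x \<in> ?L" for x
    using that T1 by (auto simp: noncrossing_in_def diag_in_def)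
  have R: "k \<le> fst x \<and> snd x \<le> b" if "x \<in> ?R" for x
    using that T2 by (auto simp: noncrossing_in_def diag_in_def)
  have side_L: "\<not> crosses (a, k) x \<and> \<not> crosses x (a, k)" if "x \<in> ?L" for x
    using not_crosses_enclosing[of a x k] L[OF that] crosses_sym[of x] by simp
  have side_R: "\<not> crosses (k, b) x \<and> \<not> crosses x (k, b)" if "x \<in> ?R" for x
    using not_crosses_enclosing[of k x b] R[OF that] crosses_sym[of x] by simp
  have LL: "\<not> crosses x y" if xy: "x \<in> ?L" "y \<in> ?L" for x y
  proof -
    consider "x \<in> T1" "y \<in> T1" | "x = (a, k)" | "y = (a, k)" using xy by blast
    then show ?thesis using T1 side_L xy by cases (auto simp: noncrossing_in_def)
  qed
  have RR: "\<not> crosses x y" if xy: "x \<in> ?R" "y \<in> ?R" for x y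
  proof -
    consider "x \<in> T2" "y \<in> T2" | "x = (k, b)" | "y = (k, b)" using xy by blast
    then show ?thesis using T2 side_R xy by cases (auto simp: noncrossing_in_def)
  qed
  have LR: "\<not> crosses x y \<and> \<not> crosses y x" if "x \<in> ?L" "y \<in> ?R" for x y
    using not_crosses_separated[of x k y] L[OF that(1)] R[OF that(2)] crosses_sym by blast
  have "T1 \<union> T2 \<union> ({(a, k), (k, b)} \<inter> Collect (diag_in a b)) \<subseteq> ?L \<union> ?R"
    by auto
  moreover have "T1 \<union> T2 \<union> ({(a, k), (k, b)} \<inter> Collect (diag_in a b)) \<subseteq> Collect (diag_in a b)"
    using T1 T2 ak kb by (auto simp: noncrossing_in_def diag_in_def)
  moreover have "\<not> crosses x y" if xy: "x \<in> ?L \<union> ?R" "y \<in> ?L \<union> ?R" for x y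
  proof -
    consider "x \<in> ?L" "y \<in> ?L" | "x \<in> ?R" "y \<in> ?R" | "x \<in> ?L" "y \<in> ?R" | "x \<in> ?R" "y \<in> ?L"
      using xy by blast
    then show ?thesis using LL RR LR by cases blast+
  qed
  ultimately show ?thesis
    unfolding noncrossing_in_def by (meson subsetD)
qed

lemma noncrossing_in_combine:
  assumes ab: "a + 3 \<le> b" and ak: "a < k" and kb: "k < b"
    and F: "noncrossing_in a b F" and compat: "\<forall>x\<in>F. \<not> crosses (a, k) x \<and> \<not> crosses (k, b) x"
    and T1: "F \<inter> Collect (diag_in a k) \<subseteq> T1" "noncrossing_in a k T1" "card T1 = k - a - 2"
    and T2: "F \<inter> Collect (diag_in k b) \<subseteq> T2" "noncrossing_in k b T2" "card T2 = b - k - 2"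
  defines "T \<equiv> T1 \<union> T2 \<union> ({(a, k), (k, b)} \<inter> Collect (diag_in a b))"
  shows "F \<subseteq> T" and "noncrossing_in a b T" and "card T = b - a - 2"
proof -
  let ?E = "{(a, k), (k, b)} \<inter> Collect (diag_in a b)"
  have "F \<subseteq> Collect (diag_in a b)" using F by (simp add: noncrossing_in_def)
  then show "F \<subseteq> T"
    using noncrossing_in_split[OF ak kb compat] T1(1) T2(1) unfolding T_def by blast
  show "noncrossing_in a b T" unfolding T_def by (rule noncrossing_in_glue[OF ak kb T1(2) T2(2)])
  have "T1 \<inter> T2 = {}" "(T1 \<union> T2) \<inter> ?E = {}"
    using T1(2) T2(2) ak kb by (fastforce simp: noncrossing_in_def diag_in_def)+
  then have "card T = card T1 + card T2 + card ?E"
    using noncrossing_in_finite[OF T1(2)] noncrossing_in_finite[OF T2(2)]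
    by (simp add: T_def card_Un_disjoint)
  moreover have "card ?E = b - a - 2 - (k - a - 2) - (b - k - 2)"
    using ab ak kb by (cases "k = a + 1"; cases "k + 1 = b") (auto simp: diag_in_def)
  ultimately show "card T = b - a - 2"
    using T1(3) T2(3) ab ak kb by simp
qed

lemma noncrossing_in_extend:
  assumes "noncrossing_in a b F" "fst d + 2 \<le> snd d" "d \<notin> F"
  shows "\<exists>T. F \<subseteq> T \<and> noncrossing_in a b T \<and> card T = b - a - 2 \<and> d \<notin> T"
  using assms
proof (induction "b - a" arbitrary: a b F rule: less_induct)
  case less
  show ?case
  proof (cases "a + 3 \<le> b")
    case False
    have "\<not> diag_in a b x" for x using False by (cases x) (auto simp: diag_in_def)
    then have "F = {}" using less.prems(1) by (auto simp: noncrossing_in_def)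
    then show ?thesis using False by (intro exI[of _ "{}"]) (simp add: noncrossing_in_def)
  next
    case True
    obtain k where ak: "a < k" and kb: "k < b" and d: "d \<noteq> (a, k)" "d \<noteq> (k, b)"
      and compat: "\<forall>x\<in>F. \<not> crosses (a, k) x \<and> \<not> crosses (k, b) x"
      using noncrossing_in_apex[OF less.prems(1) _ less.prems(2,3)] True by auto
    have "noncrossing_in a k (F \<inter> Collect (diag_in a k))" "noncrossing_in k b (F \<inter> Collect (diag_in k b))"
      using less.prems(1) by (auto simp: noncrossing_in_def)
    then have F1: "noncrossing_in a k (F \<inter> Collect (diag_in a k))"
      and F2: "noncrossing_in k b (F \<inter> Collect (diag_in k b))" by blast+
    have "\<exists>T. F \<inter> Collect (diag_in a k) \<subseteq> T \<and> noncrossing_in a k T \<and> card T = k - a - 2 \<and> d \<notin> T"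
      by (rule less.hyps[OF _ F1 less.prems(2)]) (use ak kb less.prems(3) in auto)
    then obtain T1 where T1: "F \<inter> Collect (diag_in a k) \<subseteq> T1" "noncrossing_in a k T1"
      "card T1 = k - a - 2" "d \<notin> T1" by blast
    have "\<exists>T. F \<inter> Collect (diag_in k b) \<subseteq> T \<and> noncrossing_in k b T \<and> card T = b - k - 2 \<and> d \<notin> T"
      by (rule less.hyps[OF _ F2 less.prems(2)]) (use ak kb less.prems(3) in auto)
    then obtain T2 where T2: "F \<inter> Collect (diag_in k b) \<subseteq> T2" "noncrossing_in k b T2"
      "card T2 = b - k - 2" "d \<notin> T2" by blast
    note T = noncrossing_in_combine[OF True ak kb less.prems(1) compat T1(1-3) T2(1-3)]
    have "d \<notin> T1 \<union> T2 \<union> ({(a, k), (k, b)} \<inter> Collect (diag_in a b))"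
      using T1(4) T2(4) d by simp
    then show ?thesis using T by blast
  qed
qed

lemma diagonals_eq_diag_in: "diagonals n = Collect (diag_in 0 (n - 1))"
proof -
  have "is_diag n (i, j) \<longleftrightarrow> diag_in 0 (n - 1) (i, j)" for i j
    unfolding is_diag_def diag_in_def by auto
  then show ?thesis by (auto simp: diagonals_def)
qed

lemma noncrossing_iff_noncrossing_in: "noncrossing n D \<longleftrightarrow> noncrossing_in 0 (n - 1) D"
  by (simp add: noncrossing_def noncrossing_in_def diagonals_eq_diag_in)

lemma finite_diagonals: "finite (diagonals n)"
  by (simp add: diagonals_eq_diag_in finite_diag_in)

lemma finite_noncrossing_sets: "finite {D. noncrossing n D}"
  by (rule finite_subset[of _ "Pow (diagonals n)"]) (auto simp: noncrossing_def finite_diagonals)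

lemma noncrossing_extends_to_triangulation:
  assumes "noncrossing n D" "fst d + 2 \<le> snd d" "d \<notin> D"
  obtains T where "triangulation n T" "D \<subseteq> T" "d \<notin> T"
proof -
  have "noncrossing_in 0 (n - 1) D" using assms(1) by (simp add: noncrossing_iff_noncrossing_in)
  then obtain T where "D \<subseteq> T" "noncrossing_in 0 (n - 1) T" "card T = n - 1 - 0 - 2" "d \<notin> T"
    using noncrossing_in_extend[OF _ assms(2,3)] by blast
  moreover have "n - 1 - 0 - 2 = n - 3" by simp
  ultimately show thesis using that by (simp add: triangulation_def noncrossing_iff_noncrossing_in)
qed

definition triangulations_over :: "nat \<Rightarrow> diag set \<Rightarrow> diag set set" where
  "triangulations_over n D = {T. triangulation n T \<and> D \<subseteq> T}"

lemma finite_triangulations_over: "finite (triangulations_over n D)"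
  by (rule finite_subset[of _ "Pow (diagonals n)"])
    (auto simp: triangulations_over_def triangulation_def noncrossing_def finite_diagonals)

lemma triangulations_over_nonempty:
  assumes "3 \<le> n" "noncrossing n D"
  shows "triangulations_over n D \<noteq> {}"
proof -
  have "(0, n - 1) \<notin> D"
    using assms(2) by (auto simp: noncrossing_def diagonals_def is_diag_def)
  moreover have "fst (0, n - 1) + 2 \<le> snd (0::nat, n - 1)" using assms(1) by simp
  ultimately obtain T where "triangulation n T" "D \<subseteq> T"
    using noncrossing_extends_to_triangulation[OF assms(2)] by blast
  then show ?thesis by (auto simp: triangulations_over_def)
qed

lemma Phi_eq_fraction:
  "Phi n D d = real (card {T \<in> triangulations_over n D. d \<in> T})
                / (real (card (triangulations_over n D)) * real (n - 3))"
proof -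
  have "(\<Sum>T\<in>triangulations_over n D. Phi_T n T d)
        = real (card {T \<in> triangulations_over n D. d \<in> T}) / real (n - 3)"
    unfolding Phi_T_def by (simp add: sum.inter_filter[OF finite_triangulations_over, symmetric])
  then show ?thesis
    by (simp add: Phi_def triangulations_over_def[symmetric])
qed

lemma Phi_nonneg: "0 \<le> Phi n D d"
  by (simp add: Phi_eq_fraction)

lemma Phi_eq_0:
  assumes "d \<notin> diagonals n"
  shows "Phi n D d = 0"
proof -
  have "{T \<in> triangulations_over n D. d \<in> T} = {}"
    using assms by (auto simp: triangulations_over_def triangulation_def noncrossing_def)
  then have "card {T \<in> triangulations_over n D. d \<in> T} = 0" by (simp only: card.empty)
  then show ?thesis by (simp add: Phi_eq_fraction)
qed

lemma Phi_mem_eq: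
  assumes "4 \<le> n" "noncrossing n D" "d \<in> D"
  shows "Phi n D d = 1 / real (n - 3)"
proof -
  have "{T \<in> triangulations_over n D. d \<in> T} = triangulations_over n D"
    using assms(3) by (auto simp: triangulations_over_def)
  moreover have "card (triangulations_over n D) \<noteq> 0"
    using triangulations_over_nonempty[of n D] assms(1,2) finite_triangulations_over by simp
  ultimately show ?thesis by (simp add: Phi_eq_fraction)
qed

lemma Phi_not_mem_less:
  assumes n: "4 \<le> n" and D: "noncrossing n D" and d: "d \<notin> D"
  shows "Phi n D d < 1 / real (n - 3)"
proof (cases "d \<in> diagonals n")
  case False
  then show ?thesis using n by (simp add: Phi_eq_0)
next
  case True
  then have "fst d + 2 \<le> snd d" by (auto simp: diagonals_def is_diag_def)
  then obtain T0 where "T0 \<in> triangulations_over n D" "d \<notin> T0"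
    using noncrossing_extends_to_triangulation[OF D _ d] by (auto simp: triangulations_over_def)
  then have "card {T \<in> triangulations_over n D. d \<in> T} < card (triangulations_over n D)"
    by (intro psubset_card_mono finite_triangulations_over) auto
  moreover have "real (n - 3) > 0" using n by simp
  ultimately show ?thesis
    by (simp add: Phi_eq_fraction divide_less_eq)
qed

lemma Phi_le:
  assumes "4 \<le> n" "noncrossing n D"
  shows "Phi n D d \<le> 1 / real (n - 3)"
  using Phi_mem_eq[OF assms, of d] Phi_not_mem_less[OF assms, of d] by (cases "d \<in> D") auto

lemma sum_Phi_T:
  assumes "4 \<le> n" "triangulation n T"
  shows "(\<Sum>d\<in>diagonals n. Phi_T n T d) = 1"
proof -
  have "T \<subseteq> diagonals n" "card T = n - 3"
    using assms(2) by (auto simp: triangulation_def noncrossing_def)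
  then have "{d \<in> diagonals n. d \<in> T} = T" "real (card T) = real (n - 3)" by auto
  then show ?thesis
    using assms(1) unfolding Phi_T_def by (simp add: sum.inter_filter[OF finite_diagonals, symmetric])
qed

lemma sum_Phi:
  assumes "4 \<le> n" "noncrossing n D"
  shows "(\<Sum>d\<in>diagonals n. Phi n D d) = 1"
proof -
  let ?S = "triangulations_over n D"
  have "(\<Sum>d\<in>diagonals n. Phi n D d) = (\<Sum>T\<in>?S. \<Sum>d\<in>diagonals n. Phi_T n T d) / real (card ?S)"
    by (simp add: Phi_def triangulations_over_def[symmetric] sum_divide_distrib[symmetric] sum.swap[of _ "diagonals n"])
  also have "\<dots> = 1"
    using sum_Phi_T[OF assms(1)] triangulations_over_nonempty[of n D] assms finite_triangulations_over
    by (simp add: triangulations_over_def)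
  finally show ?thesis .
qed

(* A point of assoc n, with its chain of noncrossing sets left implicit as the support. *)
definition chain_weight :: "nat \<Rightarrow> (diag set \<Rightarrow> real) \<Rightarrow> bool" where
  "chain_weight n f \<longleftrightarrow> (\<forall>D. 0 \<le> f D) \<and> (\<forall>D. f D \<noteq> 0 \<longrightarrow> noncrossing n D)
     \<and> (\<forall>D D'. f D \<noteq> 0 \<longrightarrow> f D' \<noteq> 0 \<longrightarrow> D \<subseteq> D' \<or> D' \<subseteq> D)"

lemma finite_support_chain_weight: "chain_weight n f \<Longrightarrow> finite {D. f D \<noteq> 0}"
  by (rule finite_subset[OF _ finite_noncrossing_sets]) (auto simp: chain_weight_def)

lemma chain_weight_fun_upd:
  assumes "chain_weight n f" "0 \<le> x" "x \<noteq> 0 \<Longrightarrow> f D \<noteq> 0"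
  shows "chain_weight n (f(D := x))"
  using assms unfolding chain_weight_def by (metis fun_upd_apply)

lemma chain_weightD:
  assumes "chain_weight n f"
  shows "0 \<le> f D" and "f D \<noteq> 0 \<Longrightarrow> noncrossing n D"
    and "f D \<noteq> 0 \<Longrightarrow> f D' \<noteq> 0 \<Longrightarrow> D \<subseteq> D' \<or> D' \<subseteq> D"
  using assms unfolding chain_weight_def by simp_all

lemma chain_weight_eq_0:
  assumes f: "chain_weight n f" and mass: "(\<Sum>D | noncrossing n D. f D) = 0"
  shows "f = (\<lambda>_. 0)"
proof
  fix D
  have "\<forall>D\<in>{D. noncrossing n D}. f D = 0"
    using sum_nonneg_eq_0_iff[OF finite_noncrossing_sets, of n f] mass chain_weightD(1)[OF f] by blast
  then show "f D = 0" using chain_weightD(2)[OF f, of D] by blast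
qed

lemma chain_weight_least_face:
  assumes "chain_weight n f" "f \<noteq> (\<lambda>_. 0)"
  obtains D0 where "f D0 > 0" "\<And>D. f D \<noteq> 0 \<Longrightarrow> D0 \<subseteq> D"
proof -
  have "{D. f D \<noteq> 0} \<noteq> {}" using assms(2) by auto
  then obtain D0 where D0: "f D0 \<noteq> 0" "\<And>D. f D \<noteq> 0 \<Longrightarrow> \<not> D \<subset> D0"
    using ex_min_if_finite[OF finite_support_chain_weight[OF assms(1)]] by blast
  have "D0 \<subseteq> D" if "f D \<noteq> 0" for D
  proof -
    have "D \<subseteq> D0 \<or> D0 \<subseteq> D" using chain_weightD(3)[OF assms(1) D0(1) that] by blast
    then show ?thesis using D0(2)[OF that] by blast
  qed
  moreover have "f D0 > 0" using D0(1) chain_weightD(1)[OF assms(1), of D0] by linarith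
  ultimately show thesis using that by blast
qed

lemma sum_Phi_map:
  assumes "4 \<le> n"
  shows "(\<Sum>d\<in>diagonals n. Phi_map n f d) = (\<Sum>D | noncrossing n D. f D)"
proof -
  have "(\<Sum>d\<in>diagonals n. Phi_map n f d) = (\<Sum>D | noncrossing n D. f D * (\<Sum>d\<in>diagonals n. Phi n D d))"
    unfolding Phi_map_def by (simp add: sum.swap[of _ "diagonals n"] sum_distrib_left)
  also have "\<dots> = (\<Sum>D | noncrossing n D. f D)"
    using sum_Phi[OF assms] by simp
  finally show ?thesis .
qed

lemma Phi_map_fun_upd:
  assumes "noncrossing n D"
  shows "Phi_map n (f(D := x)) d = Phi_map n f d + (x - f D) * Phi n D d"
proof -
  let ?N = "{D. noncrossing n D}"
  have "(\<Sum>E\<in>?N - {D}. (f(D := x)) E * Phi n E d) = (\<Sum>E\<in>?N - {D}. f E * Phi n E d)"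
    by (intro sum.cong) auto
  then show ?thesis
    using sum.remove[OF finite_noncrossing_sets, of D n "\<lambda>E. (f(D := x)) E * Phi n E d"]
      sum.remove[OF finite_noncrossing_sets, of D n "\<lambda>E. f E * Phi n E d"] assms
    unfolding Phi_map_def by (simp add: algebra_simps)
qed

lemma Phi_map_eq_max_iff:
  assumes n: "4 \<le> n" and f: "chain_weight n f"
    and D0: "f D0 > 0" "\<And>D. f D \<noteq> 0 \<Longrightarrow> D0 \<subseteq> D"
  shows "Phi_map n f d = (\<Sum>D | noncrossing n D. f D) / real (n - 3) \<longleftrightarrow> d \<in> D0"
proof -
  let ?N = "{D. noncrossing n D}" and ?m = "1 / real (n - 3)"
  have max: "(\<Sum>D\<in>?N. f D) / real (n - 3) = (\<Sum>D\<in>?N. f D * ?m)"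
    by (simp add: sum_divide_distrib)
  show ?thesis
  proof (cases "d \<in> D0")
    case True
    have "f D * Phi n D d = f D * ?m" if "noncrossing n D" for D
      using Phi_mem_eq[OF n that, of d] D0(2)[of D] True by (cases "f D = 0") auto
    then show ?thesis using True by (simp add: Phi_map_def max)
  next
    case False
    have "f D * Phi n D d \<le> f D * ?m" if "D \<in> ?N" for D
      using mult_left_mono[OF Phi_le[OF n] chain_weightD(1)[OF f]] that by simp
    moreover have "noncrossing n D0" using chain_weightD(2)[OF f] D0(1) by simp
    moreover have "f D0 * Phi n D0 d < f D0 * ?m"
      using mult_strict_left_mono[OF Phi_not_mem_less[OF n \<open>noncrossing n D0\<close> False] D0(1)] by simp
    ultimately have "Phi_map n f d < (\<Sum>D\<in>?N. f D * ?m)"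
      unfolding Phi_map_def by (intro sum_strict_mono_ex1[OF finite_noncrossing_sets]) auto
    then show ?thesis using False by (simp add: max)
  qed
qed

lemma least_face_unique:
  assumes n: "4 \<le> n" and f: "chain_weight n f" and g: "chain_weight n g"
    and eq: "Phi_map n f = Phi_map n g"
    and D0: "f D0 > 0" "\<And>D. f D \<noteq> 0 \<Longrightarrow> D0 \<subseteq> D"
    and E0: "g E0 > 0" "\<And>D. g D \<noteq> 0 \<Longrightarrow> E0 \<subseteq> D"
  shows "D0 = E0"
proof -
  have "(\<Sum>D | noncrossing n D. f D) = (\<Sum>D | noncrossing n D. g D)"
    using sum_Phi_map[OF n, of f] sum_Phi_map[OF n, of g] eq by simp
  then have "d \<in> D0 \<longleftrightarrow> d \<in> E0" for d
    using Phi_map_eq_max_iff[OF n f D0, of d] Phi_map_eq_max_iff[OF n g E0, of d] eq by simp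
  then show ?thesis by blast
qed

lemma card_support_fun_upd:
  fixes f :: "'a \<Rightarrow> 'b::zero"
  assumes "finite {x. f x \<noteq> 0}" "f y \<noteq> 0"
  shows "card {x. (f(y := v)) x \<noteq> 0} = card {x. f x \<noteq> 0} - (if v = 0 then 1 else 0)"
proof -
  have "{x. (f(y := v)) x \<noteq> 0} = (if v = 0 then {x. f x \<noteq> 0} - {y} else {x. f x \<noteq> 0})"
    using assms(2) by auto
  then show ?thesis using assms by (simp add: card_Diff_singleton)
qed

lemma Phi_map_chain_weight_inj:
  assumes "4 \<le> n" "chain_weight n f" "chain_weight n g" "Phi_map n f = Phi_map n g"
  shows "f = g"
  using assms(2-)
proof (induction "card {D. f D \<noteq> 0} + card {D. g D \<noteq> 0}" arbitrary: f g rule: less_induct)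
  case less
  note n = assms(1) and f = less.prems(1) and g = less.prems(2) and eq = less.prems(3)
  have mass: "(\<Sum>D | noncrossing n D. f D) = (\<Sum>D | noncrossing n D. g D)"
    using sum_Phi_map[OF n, of f] sum_Phi_map[OF n, of g] eq by simp
  show ?case
  proof (cases "f = (\<lambda>_. 0) \<or> g = (\<lambda>_. 0)")
    case True
    then show ?thesis using chain_weight_eq_0[OF f] chain_weight_eq_0[OF g] mass by auto
  next
    case False
    obtain D0 where D0: "f D0 > 0" "\<And>D. f D \<noteq> 0 \<Longrightarrow> D0 \<subseteq> D"
      using chain_weight_least_face[OF f] False by blast
    obtain E0 where E0: "g E0 > 0" "\<And>D. g D \<noteq> 0 \<Longrightarrow> E0 \<subseteq> D"
      using chain_weight_least_face[OF g] False by blast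
    have "D0 = E0" by (rule least_face_unique[OF n f g eq D0 E0])
    have D0_nc: "noncrossing n D0" using chain_weightD(2)[OF f] D0(1) by simp
    have pos: "f D0 > 0" "g D0 > 0" using D0(1) E0(1) \<open>D0 = E0\<close> by auto
    define c where "c = min (f D0) (g D0)"
    define f' where "f' = f(D0 := f D0 - c)"
    define g' where "g' = g(D0 := g D0 - c)"
    have "chain_weight n f'" unfolding f'_def
      by (rule chain_weight_fun_upd[OF f]) (use pos in \<open>auto simp: c_def\<close>)
    moreover have "chain_weight n g'" unfolding g'_def
      by (rule chain_weight_fun_upd[OF g]) (use pos in \<open>auto simp: c_def\<close>)
    moreover have "Phi_map n f' = Phi_map n g'"
      using eq by (simp add: fun_eq_iff f'_def g'_def Phi_map_fun_upd[OF D0_nc])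
    moreover have "card {D. f' D \<noteq> 0} + card {D. g' D \<noteq> 0} < card {D. f D \<noteq> 0} + card {D. g D \<noteq> 0}"
    proof -
      note fin = finite_support_chain_weight[OF f] finite_support_chain_weight[OF g]
      have "card {D. f D \<noteq> 0} > 0" "card {D. g D \<noteq> 0} > 0"
        using pos fin by (auto simp: card_gt_0_iff intro!: exI[of _ D0])
      moreover have "f D0 - c = 0 \<or> g D0 - c = 0" by (auto simp: c_def)
      ultimately show ?thesis unfolding f'_def g'_def
        using card_support_fun_upd[OF fin(1), of D0 "f D0 - c"] card_support_fun_upd[OF fin(2), of D0 "g D0 - c"] pos
        by auto
    qed
    ultimately have "f' = g'" using less.hyps by blast
    moreover have "f = f'(D0 := f' D0 + c)" "g = g'(D0 := g' D0 + c)"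
      by (simp_all add: f'_def g'_def)
    ultimately show ?thesis by simp
  qed
qed

lemma chain_weight_of_chain_simplex:
  assumes "nc_chain n C" "a \<in> chain_simplex C"
  shows "chain_weight n a"
proof -
  have "D \<in> C" if "a D \<noteq> 0" for D
    using assms(2) that by (auto simp: chain_simplex_def)
  then show ?thesis
    using assms unfolding nc_chain_def chain_simplex_def chain_weight_def by simp
qed

lemma Phi_map_in_chamber:
  assumes n: "4 \<le> n" and C: "nc_chain n C" and a: "a \<in> chain_simplex C"
  shows "Phi_map n a \<in> chamber n"
proof -
  have "(\<Sum>D | noncrossing n D. a D) = (\<Sum>D\<in>C. a D)"
    using C a by (intro sum.mono_neutral_right finite_noncrossing_sets)
      (auto simp: nc_chain_def chain_simplex_def)
  then have "(\<Sum>d\<in>diagonals n. Phi_map n a d) = 1"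
    using sum_Phi_map[OF n, of a] a by (simp add: chain_simplex_def)
  moreover have "0 \<le> Phi_map n a d" for d
    using a unfolding Phi_map_def chain_simplex_def by (auto intro!: sum_nonneg mult_nonneg_nonneg Phi_nonneg)
  ultimately show ?thesis
    by (simp add: chamber_def Phi_map_def Phi_eq_0)
qed

lemma Hausdorff_space_euclidean_fun: "Hausdorff_space (euclidean :: ('a \<Rightarrow> 'b::metric_space) topology)"
  by (metis euclidean_product_topology Hausdorff_space_product_topology Hausdorff_space_euclidean)

lemma compact_inj_imp_homeomorphism:
  fixes f :: "'a::topological_space \<Rightarrow> 'b \<Rightarrow> 'c::metric_space"
  assumes S: "compact S" and f: "continuous_on S f" and inj: "inj_on f S"
  shows "\<exists>g. homeomorphism S (f ` S) f g"
proof (intro exI homeomorphismI)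
  have "continuous_map (subtopology euclidean (f ` S)) (top_of_set S) (inv_into S f)"
    using S f inj Hausdorff_space_euclidean_fun
    by (intro continuous_inverse_map[where f = f]) (auto simp: compact_space_subtopology)
  then show "continuous_on (f ` S) (inv_into S f)" by simp
qed (use f inj in \<open>auto simp: f_inv_into_f\<close>)

lemma continuous_on_Phi_map: "continuous_on S (Phi_map n)"
proof (rule continuous_on_coordinatewise_then_product)
  fix d
  show "continuous_on S (\<lambda>a. Phi_map n a d)"
    unfolding Phi_map_def
    by (intro continuous_on_sum continuous_on_mult continuous_on_const
        continuous_on_subset[OF continuous_on_product_coordinates] subset_UNIV)
qed

lemma compact_chain_simplex:
  assumes "finite C"
  shows "compact (chain_simplex C)"
proof -
  define K where "K D = (if D \<in> C then {0..1} else {0 :: real})" for D :: "diag set"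
  have "compact (PiE UNIV K)"
    using compactin_PiE[of "\<lambda>_. euclidean" UNIV K]
    by (auto simp: K_def euclidean_product_topology)
  moreover have "closed {a :: diag set \<Rightarrow> real. (\<Sum>D\<in>C. a D) = 1}"
    by (intro closed_Collect_eq continuous_on_sum continuous_on_const
        continuous_on_subset[OF continuous_on_product_coordinates] subset_UNIV)
  moreover have "chain_simplex C = PiE UNIV K \<inter> {a. (\<Sum>D\<in>C. a D) = 1}"
  proof (intro set_eqI iffI)
    fix a assume a: "a \<in> chain_simplex C"
    have "a D \<le> 1" if "D \<in> C" for D
      using member_le_sum[of D C a] a assms that by (auto simp: chain_simplex_def)
    then show "a \<in> PiE UNIV K \<inter> {a. (\<Sum>D\<in>C. a D) = 1}"
      using a by (auto simp: chain_simplex_def K_def)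
  next
    fix a assume "a \<in> PiE UNIV K \<inter> {a. (\<Sum>D\<in>C. a D) = 1}"
    then show "a \<in> chain_simplex C"
      by (auto simp: chain_simplex_def K_def PiE_iff split: if_splits)
  qed
  ultimately show ?thesis by (simp add: compact_Int_closed)
qed

lemma compact_assoc: "compact (assoc n)"
proof -
  have "finite {C. nc_chain n C}"
    by (rule finite_subset[of _ "Pow {D. noncrossing n D}"])
      (auto simp: nc_chain_def finite_noncrossing_sets)
  then show ?thesis
    unfolding assoc_def by (rule compact_UN) (simp add: compact_chain_simplex nc_chain_def)
qed

theorem proposition11:
  fixes n :: nat
  assumes "4 \<le> n"
  shows "(\<forall>C. nc_chain n C \<longrightarrow>
            Phi_map n ` chain_simplex C \<subseteq> chamber n
            \<and> (\<exists>g. homeomorphism (chain_simplex C) (Phi_map n ` chain_simplex C) (Phi_map n) g))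
         \<and> Phi_map n ` assoc n \<subseteq> chamber n
         \<and> inj_on (Phi_map n) (assoc n)
         \<and> (\<exists>g. homeomorphism (assoc n) (Phi_map n ` assoc n) (Phi_map n) g)"
proof -
  have inj: "inj_on (Phi_map n) (assoc n)"
    by (rule inj_onI, rule Phi_map_chain_weight_inj[OF assms])
      (auto simp: assoc_def intro: chain_weight_of_chain_simplex)
  have "\<exists>g. homeomorphism (chain_simplex C) (Phi_map n ` chain_simplex C) (Phi_map n) g"
    if "nc_chain n C" for C
    using that inj_on_subset[OF inj] compact_chain_simplex continuous_on_Phi_map
    by (intro compact_inj_imp_homeomorphism) (auto simp: nc_chain_def assoc_def)
  moreover have "Phi_map n ` assoc n \<subseteq> chamber n"
    using Phi_map_in_chamber[OF assms] by (auto simp: assoc_def)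
  ultimately show ?thesis
    using inj compact_inj_imp_homeomorphism[OF compact_assoc continuous_on_Phi_map inj]
    by (auto simp: assoc_def)
qed

end
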